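(* Let $G$ be a graph. If $H$ is a maximal $r$-correspondence-deletable subgraph of $G$ (i.e., no $r$-correspondence-deletable subgraph of $G$ properly contains $H$), then $G-V(H)$ does not contain an $r$-correspondence-deletable subgraph (with respect to $G-V(H)$).
   Context: All graphs are finite and simple. A correspondence assignment for a graph $H$ is a pair $(L,M)$ where $L$ assigns to each vertex $v$ a list $L(v)$ of colours and $M$ assigns to each edge $e=uv$ a partial matching $M_e$ between $\{u\}\times L(u)$ and $\{v\}\times L(v)$; an $(L,M)$-colouring is a choice $\varphi(v)\in L(v)$ for every $v$ such that for every edge $uv$, $(u,\varphi(u))$ and $(v,\varphi(v))$ are not matched in $M_{uv}$. A nonempty induced subgraph $H$ of a graph $G$ is $r$-correspondence-deletable (in $G$) if for every correspondence assignment $(L,M)$ of $H$ with $|L(v)|\ge r-(\deg_G(v)-\deg_H(v))$ for each $v\in V(H)$, $H$ has an $(L,M)$-colouring. *)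

theory Defs
  imports Main
begin

text \<open>A finite simple graph: finite vertex set V, symmetric irreflexive
adjacency E (adjacency outside V is ignored; only vertices in V are counted).\<close>
definition graph :: "'a set \<Rightarrow> ('a \<Rightarrow> 'a \<Rightarrow> bool) \<Rightarrow> bool" where
  "graph V E \<longleftrightarrow> finite V \<and> (\<forall>u v. E u v \<longrightarrow> E v u) \<and> (\<forall>v. \<not> E v v)"

definition deg :: "'a set \<Rightarrow> ('a \<Rightarrow> 'a \<Rightarrow> bool) \<Rightarrow> 'a \<Rightarrow> nat" where
  "deg V E v = card {u \<in> V. E v u}"

text \<open>Correspondence assignment (L, M) for the graph induced on S:
L v is a finite list of colours; M u v c d means that (u,c) and (v,d) are
matched in the matching M_uv; M is symmetric and each M_uv is a partial
matching between {u} x L u and {v} x L v, defined only on edges.\<close>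
definition corr_assignment ::
  "'a set \<Rightarrow> ('a \<Rightarrow> 'a \<Rightarrow> bool) \<Rightarrow> ('a \<Rightarrow> nat set) \<Rightarrow> ('a \<Rightarrow> 'a \<Rightarrow> nat \<Rightarrow> nat \<Rightarrow> bool) \<Rightarrow> bool" where
  "corr_assignment S E L M \<longleftrightarrow>
     (\<forall>v\<in>S. finite (L v)) \<and>
     (\<forall>u v c d. M u v c d \<longrightarrow> u \<in> S \<and> v \<in> S \<and> E u v \<and> c \<in> L u \<and> d \<in> L v) \<and>
     (\<forall>u v c d. M u v c d \<longleftrightarrow> M v u d c) \<and>
     (\<forall>u v c d d'. M u v c d \<and> M u v c d' \<longrightarrow> d = d')"

definition corr_colouring ::
  "'a set \<Rightarrow> ('a \<Rightarrow> 'a \<Rightarrow> bool) \<Rightarrow> ('a \<Rightarrow> nat set) \<Rightarrow> ('a \<Rightarrow> 'a \<Rightarrow> nat \<Rightarrow> nat \<Rightarrow> bool)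
     \<Rightarrow> ('a \<Rightarrow> nat) \<Rightarrow> bool" where
  "corr_colouring S E L M \<phi> \<longleftrightarrow>
     (\<forall>v\<in>S. \<phi> v \<in> L v) \<and>
     (\<forall>u\<in>S. \<forall>v\<in>S. E u v \<longrightarrow> \<not> M u v (\<phi> u) (\<phi> v))"

text \<open>The induced subgraph G[S] of G = (V,E) is r-correspondence-deletable in G.\<close>
definition corr_deletable :: "nat \<Rightarrow> 'a set \<Rightarrow> ('a \<Rightarrow> 'a \<Rightarrow> bool) \<Rightarrow> 'a set \<Rightarrow> bool" where
  "corr_deletable r V E S \<longleftrightarrow> S \<noteq> {} \<and> S \<subseteq> V \<and>
     (\<forall>L M. corr_assignment S E L M \<and>
        (\<forall>v\<in>S. int (card (L v)) \<ge> int r - (int (deg V E v) - int (deg S E v)))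
        \<longrightarrow> (\<exists>\<phi>. corr_colouring S E L M \<phi>))"

end

theory Submission
  imports Defs
begin

text \<open>If \<open>T\<close> were \<open>r\<close>-correspondence-deletable in \<open>G - V(H)\<close>, then \<open>H \<union> T\<close> would be
\<open>r\<close>-correspondence-deletable in \<open>G\<close>, contradicting maximality. Given admissible lists on \<open>H \<union> T\<close>,
first colour \<open>T\<close>: a vertex of \<open>T\<close> has the same number of neighbours outside \<open>H \<union> T\<close> in \<open>G\<close>
as outside \<open>T\<close> in \<open>G - V(H)\<close>, so its list is long enough. Then remove from the list of each
vertex of \<open>H\<close> the colours matched to the colours of its neighbours in \<open>T\<close>. Since the matchings
are partial matchings, it loses at most one colour per such neighbour, which is exactly the
amount by which its bound for \<open>H \<union> T\<close> exceeds its bound for \<open>H\<close>; so \<open>H\<close> can be coloured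
from the shortened lists, and the two colourings combine.\<close>

lemma deg_Un_disjoint:
  assumes "finite A" "finite B" "A \<inter> B = {}"
  shows "deg (A \<union> B) E v = deg A E v + deg B E v"
proof -
  have "{u \<in> A \<union> B. E v u} = {u \<in> A. E v u} \<union> {u \<in> B. E v u}" by auto
  then show ?thesis
    unfolding deg_def using assms by (simp add: card_Un_disjoint disjoint_iff)
qed

lemma corr_assignment_restrict:
  assumes "corr_assignment S E L M" "T \<subseteq> S" "\<forall>v\<in>T. L' v \<subseteq> L v"
  shows "corr_assignment T E L' (\<lambda>u v c d. M u v c d \<and> u \<in> T \<and> v \<in> T \<and> c \<in> L' u \<and> d \<in> L' v)"
  using assms unfolding corr_assignment_def by auto (meson finite_subset subsetD)

definition forbidden_colours ::
  "('a \<Rightarrow> 'a \<Rightarrow> bool) \<Rightarrow> ('a \<Rightarrow> 'a \<Rightarrow> nat \<Rightarrow> nat \<Rightarrow> bool) \<Rightarrow> 'a set \<Rightarrow> ('a \<Rightarrow> nat) \<Rightarrow> 'a \<Rightarrow> nat set"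
  where "forbidden_colours E M T \<phi> v = {c. \<exists>u\<in>T. E v u \<and> M v u c (\<phi> u)}"

lemma card_forbidden_colours_le:
  assumes "corr_assignment S E L M" "v \<in> S" "finite T"
  shows "card (forbidden_colours E M T \<phi> v) \<le> deg T E v"
proof -
  have fin: "finite (L v)" and dom: "M v u c d \<Longrightarrow> c \<in> L v" for u c d
    using assms(1,2) unfolding corr_assignment_def by blast+
  have partner_unique: "card {c. M v u c (\<phi> u)} \<le> 1" for u
  proof -
    have "finite {c. M v u c (\<phi> u)}" using dom by (blast intro: finite_subset[OF _ fin])
    moreover have "c = c'" if "M v u c (\<phi> u)" "M v u c' (\<phi> u)" for c c'
      using assms(1) that unfolding corr_assignment_def by metis
    ultimately show ?thesis by (simp add: card_le_Suc0_iff_eq)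
  qed
  have "forbidden_colours E M T \<phi> v = (\<Union>u\<in>{u \<in> T. E v u}. {c. M v u c (\<phi> u)})"
    unfolding forbidden_colours_def by blast
  then have "card (forbidden_colours E M T \<phi> v) \<le> (\<Sum>u\<in>{u \<in> T. E v u}. card {c. M v u c (\<phi> u)})"
    using assms(3) by (simp add: card_UN_le)
  also have "\<dots> \<le> (\<Sum>u\<in>{u \<in> T. E v u}. 1)" by (rule sum_mono) (rule partner_unique)
  also have "\<dots> = deg T E v" unfolding deg_def by simp
  finally show ?thesis .
qed

lemma corr_colouring_Un:
  assumes "symp E" "corr_assignment S E L M" "H \<inter> T = {}"
    and \<phi>T: "corr_colouring T E L (\<lambda>u v c d. M u v c d \<and> u \<in> T \<and> v \<in> T \<and> c \<in> L u \<and> d \<in> L v) \<phi>T"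
    and \<phi>H: "corr_colouring H E (\<lambda>v. L v - forbidden_colours E M T \<phi>T v)
              (\<lambda>u v c d. M u v c d \<and> u \<in> H \<and> v \<in> H \<and>
                 c \<in> L u - forbidden_colours E M T \<phi>T u \<and> d \<in> L v - forbidden_colours E M T \<phi>T v) \<phi>H"
  shows "corr_colouring (H \<union> T) E L M (\<lambda>v. if v \<in> H then \<phi>H v else \<phi>T v)"
proof -
  have E_sym: "E u v \<Longrightarrow> E v u" for u v using assms(1) by (rule sympD)
  have M_sym: "M u v c d \<longleftrightarrow> M v u d c" for u v c d
    using assms(2) unfolding corr_assignment_def by blast
  have H_T: "\<not> M u v (\<phi>H u) (\<phi>T v)" if "u \<in> H" "v \<in> T" "E u v" for u v
    using \<phi>H that unfolding corr_colouring_def forbidden_colours_def by blast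
  show ?thesis
    unfolding corr_colouring_def
  proof (intro conjI ballI impI)
    fix v assume "v \<in> H \<union> T"
    then show "(if v \<in> H then \<phi>H v else \<phi>T v) \<in> L v"
      using \<phi>T \<phi>H unfolding corr_colouring_def by auto
  next
    fix u v assume "u \<in> H \<union> T" "v \<in> H \<union> T" "E u v"
    then show "\<not> M u v (if u \<in> H then \<phi>H u else \<phi>T u) (if v \<in> H then \<phi>H v else \<phi>T v)"
      using \<phi>T \<phi>H H_T H_T[of v u] E_sym M_sym unfolding corr_colouring_def
      by (cases "u \<in> H"; cases "v \<in> H") auto
  qed
qed

lemma corr_deletable_Un:
  assumes G: "graph V E" and del_H: "corr_deletable r V E H" and del_T: "corr_deletable r (V - H) E T"
  shows "corr_deletable r V E (H \<union> T)"
  unfolding corr_deletable_def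
proof (intro conjI allI impI)
  have "finite V" "symp E" using G unfolding graph_def symp_def by blast+
  have "H \<subseteq> V" "T \<subseteq> V - H" "T \<noteq> {}" using del_H del_T unfolding corr_deletable_def by auto
  then show "H \<union> T \<noteq> {}" "H \<union> T \<subseteq> V" by auto
  have "finite H" "finite T"
    using \<open>finite V\<close> \<open>H \<subseteq> V\<close> \<open>T \<subseteq> V - H\<close> by (meson Diff_subset finite_subset order_trans)+
  have "H \<inter> T = {}" using \<open>T \<subseteq> V - H\<close> by blast
  have deg_V: "deg V E v = deg (V - H) E v + deg H E v" for v
    using deg_Un_disjoint[of "V - H" H E v] \<open>finite V\<close> \<open>finite H\<close> \<open>H \<subseteq> V\<close>
    by (simp add: Un_absorb2 Diff_Int_distrib2)
  have deg_HT: "deg (H \<union> T) E v = deg H E v + deg T E v" for v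
    by (rule deg_Un_disjoint[OF \<open>finite H\<close> \<open>finite T\<close> \<open>H \<inter> T = {}\<close>])
  fix L M
  assume "corr_assignment (H \<union> T) E L M \<and>
    (\<forall>v\<in>H \<union> T. int r - (int (deg V E v) - int (deg (H \<union> T) E v)) \<le> int (card (L v)))"
  then have LM: "corr_assignment (H \<union> T) E L M"
    and long: "\<And>v. v \<in> H \<union> T \<Longrightarrow> int r - (int (deg V E v) - int (deg (H \<union> T) E v)) \<le> int (card (L v))"
    by blast+
  let ?MT = "\<lambda>u v c d. M u v c d \<and> u \<in> T \<and> v \<in> T \<and> c \<in> L u \<and> d \<in> L v"
  have "corr_assignment T E L ?MT" using corr_assignment_restrict[OF LM] by blast
  moreover have "\<forall>v\<in>T. int r - (int (deg (V - H) E v) - int (deg T E v)) \<le> int (card (L v))"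
    using long deg_V deg_HT by force
  ultimately obtain \<phi>T where \<phi>T: "corr_colouring T E L ?MT \<phi>T"
    using del_T unfolding corr_deletable_def by blast
  define L' where "L' v = L v - forbidden_colours E M T \<phi>T v" for v
  let ?MH = "\<lambda>u v c d. M u v c d \<and> u \<in> H \<and> v \<in> H \<and> c \<in> L' u \<and> d \<in> L' v"
  have "corr_assignment H E L' ?MH" using corr_assignment_restrict[OF LM] L'_def by blast
  moreover have "int r - (int (deg V E v) - int (deg H E v)) \<le> int (card (L' v))" if "v \<in> H" for v
  proof -
    let ?F = "forbidden_colours E M T \<phi>T v"
    have "?F \<subseteq> L v" "finite (L v)"
      using LM that unfolding corr_assignment_def forbidden_colours_def by blast+
    then have "int (card (L v)) - int (card ?F) \<le> int (card (L' v))"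
      using diff_card_le_card_Diff[of ?F "L v"] unfolding L'_def by (simp add: finite_subset)
    moreover have "card ?F \<le> deg T E v"
      using card_forbidden_colours_le[OF LM] that \<open>finite T\<close> by blast
    ultimately show ?thesis using long[of v] deg_HT[of v] that by simp
  qed
  ultimately obtain \<phi>H where "corr_colouring H E L' ?MH \<phi>H"
    using del_H unfolding corr_deletable_def by blast
  then show "\<exists>\<phi>. corr_colouring (H \<union> T) E L M \<phi>"
    using corr_colouring_Un[OF \<open>symp E\<close> LM \<open>H \<inter> T = {}\<close> \<phi>T] unfolding L'_def by blast
qed

theorem mainTheorem17:
  fixes V H :: "'a set" and E :: "'a \<Rightarrow> 'a \<Rightarrow> bool" and r :: nat
  assumes "graph V E"
    and "corr_deletable r V E H"
    and "\<forall>H'. H \<subset> H' \<and> H' \<subseteq> V \<longrightarrow> \<not> corr_deletable r V E H'"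
  shows "\<not> (\<exists>T. T \<subseteq> V - H \<and> corr_deletable r (V - H) E T)"
proof
  assume "\<exists>T. T \<subseteq> V - H \<and> corr_deletable r (V - H) E T"
  then obtain T where "T \<subseteq> V - H" and del_T: "corr_deletable r (V - H) E T" by blast
  have "T \<noteq> {}" using del_T unfolding corr_deletable_def by blast
  then have "H \<subset> H \<union> T" using \<open>T \<subseteq> V - H\<close> by blast
  moreover have HT: "corr_deletable r V E (H \<union> T)" using corr_deletable_Un[OF assms(1,2) del_T] .
  moreover have "H \<union> T \<subseteq> V" using HT unfolding corr_deletable_def by blast
  ultimately show False using assms(3) by blast
qed

end
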